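(* Let $R$ be a commutative ring with $\mathbb{Q}\subseteq R$. Let $\mathcal{E}$ (resp. $\mathcal{F}$) be a finitely generated projective module over a commutative unital $R$-algebra $\mathcal{A}$ (resp. $\mathcal{B}$), with a symmetric, strongly nondegenerate, full inner product $\langle\cdot,\cdot\rangle_{\mathcal{E}}$ (resp. $\langle\cdot,\cdot\rangle_{\mathcal{F}}$). Let $\phi:\mathcal{A}\to\mathcal{B}$ be an algebra isomorphism. Let $\Phi:\mathcal{E}\to\mathcal{F}$ be an $R$-linear bijection along $\phi$, i.e. $\Phi(ax)=\phi(a)\Phi(x)$, which is isometric: $\phi(\langle x,y\rangle_{\mathcal{E}})=\langle\Phi(x),\Phi(y)\rangle_{\mathcal{F}}$ for all $x,y\in\mathcal{E}$. Let $\Psi=\Phi^{-1}$. Define $\Phi_*:\mathcal{C}^\bullet(\mathcal{E})\to\mathcal{C}^\bullet(\mathcal{F})$ as follows: - $\Phi_*(a)=\phi(a)$ for $a\in\mathcal{A}$; - $\Phi_*(x)=\Phi(x)$ for $x\in\mathcal{E}$; - $(\Phi_*\mathsf{C})(y_1,\dots,y_{r-1})=\Phi\big(\mathsf{C}(\Psi(y_1),\dots,\Psi(y_{r-1}))\big)$ for $\mathsf{C}\in\mathcal{C}^r(\mathcal{E})$ with $r\ge2$. Then $\Phi_*$ is an isomorphism of graded Poisson algebras $(\mathcal{C}^\bullet(\mathcal{E}),[\cdot,\cdot],\wedge)\to(\mathcal{C}^\bullet(\mathcal{F}),[\cdot,\cdot],\wedge)$.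
   Context: Strongly nondegenerate: the induced map from the module to its $\operatorname{Hom}$-dual is an isomorphism. Full: every algebra element is a finite sum $\sum_i\langle x_i,y_i\rangle$. $\operatorname{Der}(\mathcal{A})$: $R$-linear derivations. $\mathcal{C}^0(\mathcal{E})=\mathcal{A}$ and $\mathcal{C}^1(\mathcal{E})=\mathcal{E}$. For $r\ge2$, $\mathcal{C}^r(\mathcal{E})$ is the set of $\mathsf{C}\in\operatorname{Hom}_R(\mathcal{E}^{\otimes_R(r-1)},\mathcal{E})$ admitting an $R$-multilinear symbol $\sigma_{\mathsf{C}}:\mathcal{E}^{\otimes(r-2)}\to\operatorname{Der}(\mathcal{A})$ with two properties: (1) $\sigma_{\mathsf{C}}(x_1,\dots,x_{r-2})\langle u,w\rangle=\langle\mathsf{C}(x_1,\dots,x_{r-2},u),w\rangle+\langle u,\mathsf{C}(x_1,\dots,x_{r-2},w)\rangle$; (2) for $r\ge3$ and $1\le i\le r-2$, $\langle\mathsf{C}(\dots,x_i,x_{i+1},\dots)+\mathsf{C}(\dots,x_{i+1},x_i,\dots),u\rangle=\sigma_{\mathsf{C}}(x_1,\dots,\widehat{x_i},\widehat{x_{i+1}},\dots,x_{r-1},u)\langle x_i,x_{i+1}\rangle$. The same definitions apply to $\mathcal{F}$ over $\mathcal{B}$. $i_x\mathsf{C}$ inserts $x$ in the first argument. $[\cdot,\cdot]$ is the unique $R$-bilinear graded skew-symmetric map $\mathcal{C}^r\times\mathcal{C}^s\to\mathcal{C}^{r+s-2}$ with: - $[a,b]=0$ and $[a,x]=0=[x,a]$;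 - $[x,y]=\langle x,y\rangle$; - $[\mathsf{D},a]=\sigma_{\mathsf{D}}(a)=-[a,\mathsf{D}]$ for $\mathsf{D}\in\mathcal{C}^2$; - $[\mathsf{C},x]=i_x\mathsf{C}=(-1)^{r+1}[x,\mathsf{C}]$ for $r\ge2$; - $[[\mathsf{C}_1,\mathsf{C}_2],x]=(-1)^s[[\mathsf{C}_1,x],\mathsf{C}_2]+[\mathsf{C}_1,[\mathsf{C}_2,x]]$. $\wedge$ is the unique degree-$0$ $R$-bilinear product with $a\wedge b=ab$, $a\wedge x=ax=x\wedge a$, and $[\mathsf{C}_1\wedge\mathsf{C}_2,x]=(-1)^s[\mathsf{C}_1,x]\wedge\mathsf{C}_2+\mathsf{C}_1\wedge[\mathsf{C}_2,x]$. An isomorphism of graded Poisson algebras is a bijective homogeneous degree-$0$ map compatible with $\wedge$ and $[\cdot,\cdot]$. *)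

theory Defs
  imports Main
begin

definition rhom :: "('r::comm_ring_1 \<Rightarrow> 'a::comm_ring_1) \<Rightarrow> bool" where
  "rhom f \<longleftrightarrow> f 1 = 1 \<and> (\<forall>x y. f (x + y) = f x + f y) \<and> (\<forall>x y. f (x * y) = f x * f y)"

text \<open>E is finitely generated projective over A: a direct summand of A^n.
  A^n is represented by functions nat => A supported in {..<n}.\<close>
definition fg_projective :: "('a::comm_ring_1 \<Rightarrow> 'e::ab_group_add \<Rightarrow> 'e) \<Rightarrow> bool" where
  "fg_projective smul \<longleftrightarrow>
    (\<exists>(n::nat) (i::'e \<Rightarrow> nat \<Rightarrow> 'a) (p::(nat \<Rightarrow> 'a) \<Rightarrow> 'e).
       (\<forall>x y. i (x + y) = (\<lambda>k. i x k + i y k)) \<and>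
       (\<forall>a x. i (smul a x) = (\<lambda>k. a * i x k)) \<and>
       (\<forall>x k. n \<le> k \<longrightarrow> i x k = 0) \<and>
       (\<forall>v w. p (\<lambda>k. v k + w k) = p v + p w) \<and>
       (\<forall>a v. p (\<lambda>k. a * v k) = smul a (p v)) \<and>
       (\<forall>x. p (i x) = x))"

definition is_module :: "('a::comm_ring_1 \<Rightarrow> 'e::ab_group_add \<Rightarrow> 'e) \<Rightarrow> bool" where
  "is_module smul \<longleftrightarrow> (\<forall>a x y. smul a (x + y) = smul a x + smul a y) \<and>
     (\<forall>a b x. smul (a + b) x = smul a x + smul b x) \<and>
     (\<forall>a b x. smul a (smul b x) = smul (a * b) x) \<and> (\<forall>x. smul 1 x = x)"

definition Alin :: "('a::comm_ring_1 \<Rightarrow> 'e::ab_group_add \<Rightarrow> 'e) \<Rightarrow> ('e \<Rightarrow> 'a) \<Rightarrow> bool" where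
  "Alin smul g \<longleftrightarrow> (\<forall>x y. g (x + y) = g x + g y) \<and> (\<forall>a x. g (smul a x) = a * g x)"

definition ipmod :: "('a::comm_ring_1 \<Rightarrow> 'e::ab_group_add \<Rightarrow> 'e) \<Rightarrow> ('e \<Rightarrow> 'e \<Rightarrow> 'a) \<Rightarrow> bool" where
  "ipmod smul ip \<longleftrightarrow>
     is_module smul \<and> fg_projective smul \<and>
     (\<forall>x. Alin smul (ip x)) \<and> (\<forall>y. Alin smul (\<lambda>x. ip x y)) \<and>
     (\<forall>x y. ip x y = ip y x) \<and>
     (\<forall>g. Alin smul g \<longrightarrow> (\<exists>!x. ip x = g)) \<and>
     (\<forall>a. \<exists>ps :: ('e \<times> 'e) list. a = sum_list (map (\<lambda>(x, y). ip x y) ps))"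

definition is_der :: "('r::comm_ring_1 \<Rightarrow> 'a::comm_ring_1) \<Rightarrow> ('a \<Rightarrow> 'a) \<Rightarrow> bool" where
  "is_der \<iota> \<delta> \<longleftrightarrow> (\<forall>a b. \<delta> (a + b) = \<delta> a + \<delta> b) \<and> (\<forall>c a. \<delta> (\<iota> c * a) = \<iota> c * \<delta> a) \<and>
                  (\<forall>a b. \<delta> (a * b) = a * \<delta> b + b * \<delta> a)"

text \<open>R-multilinear maps of k arguments, represented as functions on lists that
  vanish on lists of the wrong length.\<close>
definition multilin :: "('r \<Rightarrow> 'e \<Rightarrow> 'e) \<Rightarrow> ('r \<Rightarrow> 'v \<Rightarrow> 'v) \<Rightarrow> nat \<Rightarrow> ('e::ab_group_add list \<Rightarrow> 'v::ab_group_add) \<Rightarrow> bool" where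
  "multilin se sv k f \<longleftrightarrow>
     (\<forall>xs. length xs \<noteq> k \<longrightarrow> f xs = 0) \<and>
     (\<forall>xs ys x y. length xs + length ys + 1 = k \<longrightarrow> f (xs @ (x + y) # ys) = f (xs @ x # ys) + f (xs @ y # ys)) \<and>
     (\<forall>xs ys x c. length xs + length ys + 1 = k \<longrightarrow> f (xs @ se c x # ys) = sv c (f (xs @ x # ys)))"

text \<open>sigma is a symbol for C in C^r(E) (r >= 2): an R-multilinear map E^(r-2) -> Der(A)
  (written uncurried: sigma xs a) with properties (1) and (2).\<close>
definition is_symbol :: "('r::comm_ring_1 \<Rightarrow> 'a::comm_ring_1) \<Rightarrow> ('a \<Rightarrow> 'e::ab_group_add \<Rightarrow> 'e) \<Rightarrow> ('e \<Rightarrow> 'e \<Rightarrow> 'a)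
     \<Rightarrow> nat \<Rightarrow> ('e list \<Rightarrow> 'e) \<Rightarrow> ('e list \<Rightarrow> 'a \<Rightarrow> 'a) \<Rightarrow> bool" where
  "is_symbol \<iota> smul ip r C \<sigma> \<longleftrightarrow>
     (\<forall>a. multilin (\<lambda>c x. smul (\<iota> c) x) (\<lambda>c b. \<iota> c * b) (r - 2) (\<lambda>xs. \<sigma> xs a)) \<and>
     (\<forall>xs. length xs = r - 2 \<longrightarrow> is_der \<iota> (\<sigma> xs)) \<and>
     (\<forall>xs u w. length xs = r - 2 \<longrightarrow> \<sigma> xs (ip u w) = ip (C (xs @ [u])) w + ip u (C (xs @ [w]))) \<and>
     (\<forall>xs ys x y u. length xs + length ys + 2 = r - 1 \<longrightarrow>
        ip (C (xs @ x # y # ys) + C (xs @ y # x # ys)) u = \<sigma> (xs @ ys @ [u]) (ip x y))"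

text \<open>Elements: Sc a (degree 0), Vc x (degree 1), Op C (degree r >= 2, C of arity r-1).
  Degrees are tracked explicitly; C^r = {0} (represented by Sc 0) for r < 0.\<close>
datatype ('a, 'e) coch = Sc 'a | Vc 'e | Op "'e list \<Rightarrow> 'e"

definition Cset :: "('r::comm_ring_1 \<Rightarrow> 'a::comm_ring_1) \<Rightarrow> ('a \<Rightarrow> 'e::ab_group_add \<Rightarrow> 'e) \<Rightarrow> ('e \<Rightarrow> 'e \<Rightarrow> 'a)
     \<Rightarrow> int \<Rightarrow> ('a, 'e) coch set" where
  "Cset \<iota> smul ip r =
     (if r < 0 then {Sc 0}
      else if r = 0 then range Sc
      else if r = 1 then range Vc
      else {Op C | C. multilin (\<lambda>c x. smul (\<iota> c) x) (\<lambda>c x. smul (\<iota> c) x) (nat r - 1) C \<and>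
                      (\<exists>\<sigma>. is_symbol \<iota> smul ip (nat r) C \<sigma>)})"

fun cadd :: "('a::comm_ring_1, 'e::ab_group_add) coch \<Rightarrow> ('a, 'e) coch \<Rightarrow> ('a, 'e) coch" where
  "cadd (Sc a) (Sc b) = Sc (a + b)"
| "cadd (Vc x) (Vc y) = Vc (x + y)"
| "cadd (Op f) (Op g) = Op (\<lambda>xs. f xs + g xs)"
| "cadd _ _ = Sc 0"

fun cscale :: "('r \<Rightarrow> 'a::comm_ring_1) \<Rightarrow> ('a \<Rightarrow> 'e::ab_group_add \<Rightarrow> 'e) \<Rightarrow> 'r \<Rightarrow> ('a, 'e) coch \<Rightarrow> ('a, 'e) coch" where
  "cscale \<iota> smul c (Sc a) = Sc (\<iota> c * a)"
| "cscale \<iota> smul c (Vc x) = Vc (smul (\<iota> c) x)"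
| "cscale \<iota> smul c (Op f) = Op (\<lambda>xs. smul (\<iota> c) (f xs))"

fun cneg :: "('a::comm_ring_1, 'e::ab_group_add) coch \<Rightarrow> ('a, 'e) coch" where
  "cneg (Sc a) = Sc (- a)"
| "cneg (Vc x) = Vc (- x)"
| "cneg (Op f) = Op (\<lambda>xs. - f xs)"

definition csign :: "int \<Rightarrow> ('a::comm_ring_1, 'e::ab_group_add) coch \<Rightarrow> ('a, 'e) coch" where
  "csign k C = (if even k then C else cneg C)"

fun cins :: "nat \<Rightarrow> 'e \<Rightarrow> ('a::comm_ring_1, 'e::ab_group_add) coch \<Rightarrow> ('a, 'e) coch" where
  "cins r x (Op f) = (if r = 2 then Vc (f [x]) else Op (\<lambda>xs. f (x # xs)))"
| "cins r x _ = Sc 0"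

definition is_bracket :: "('r::comm_ring_1 \<Rightarrow> 'a::comm_ring_1) \<Rightarrow> ('a \<Rightarrow> 'e::ab_group_add \<Rightarrow> 'e) \<Rightarrow> ('e \<Rightarrow> 'e \<Rightarrow> 'a)
     \<Rightarrow> (int \<Rightarrow> int \<Rightarrow> ('a, 'e) coch \<Rightarrow> ('a, 'e) coch \<Rightarrow> ('a, 'e) coch) \<Rightarrow> bool" where
  "is_bracket \<iota> smul ip br \<longleftrightarrow>
    (let Cs = Cset \<iota> smul ip in
     (\<forall>r s C1 C2. C1 \<in> Cs r \<longrightarrow> C2 \<in> Cs s \<longrightarrow> br r s C1 C2 \<in> Cs (r + s - 2)) \<and>
     (\<forall>r s C1 C1' C2. C1 \<in> Cs r \<longrightarrow> C1' \<in> Cs r \<longrightarrow> C2 \<in> Cs s \<longrightarrow>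
         br r s (cadd C1 C1') C2 = cadd (br r s C1 C2) (br r s C1' C2)) \<and>
     (\<forall>r s C1 C2 C2'. C1 \<in> Cs r \<longrightarrow> C2 \<in> Cs s \<longrightarrow> C2' \<in> Cs s \<longrightarrow>
         br r s C1 (cadd C2 C2') = cadd (br r s C1 C2) (br r s C1 C2')) \<and>
     (\<forall>r s C1 C2 c. C1 \<in> Cs r \<longrightarrow> C2 \<in> Cs s \<longrightarrow>
         br r s (cscale \<iota> smul c C1) C2 = cscale \<iota> smul c (br r s C1 C2) \<and>
         br r s C1 (cscale \<iota> smul c C2) = cscale \<iota> smul c (br r s C1 C2)) \<and>
     (\<forall>r s C1 C2. C1 \<in> Cs r \<longrightarrow> C2 \<in> Cs s \<longrightarrow> br r s C1 C2 = csign (r * s + 1) (br s r C2 C1)) \<and>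
     (\<forall>a b. br 0 0 (Sc a) (Sc b) = Sc 0) \<and>
     (\<forall>a x. br 0 1 (Sc a) (Vc x) = Sc 0 \<and> br 1 0 (Vc x) (Sc a) = Sc 0) \<and>
     (\<forall>x y. br 1 1 (Vc x) (Vc y) = Sc (ip x y)) \<and>
     (\<forall>f \<sigma> a. Op f \<in> Cs 2 \<longrightarrow> is_symbol \<iota> smul ip 2 f \<sigma> \<longrightarrow>
         br 2 0 (Op f) (Sc a) = Sc (\<sigma> [] a) \<and> br 0 2 (Sc a) (Op f) = Sc (- \<sigma> [] a)) \<and>
     (\<forall>r C x. 2 \<le> r \<longrightarrow> C \<in> Cs r \<longrightarrow>
         br r 1 C (Vc x) = cins (nat r) x C \<and> cins (nat r) x C = csign (r + 1) (br 1 r (Vc x) C)) \<and>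
     (\<forall>r s C1 C2 x. C1 \<in> Cs r \<longrightarrow> C2 \<in> Cs s \<longrightarrow>
         br (r + s - 2) 1 (br r s C1 C2) (Vc x) =
           cadd (csign s (br (r - 1) s (br r 1 C1 (Vc x)) C2)) (br r (s - 1) C1 (br s 1 C2 (Vc x)))))"

definition is_wedge :: "('r::comm_ring_1 \<Rightarrow> 'a::comm_ring_1) \<Rightarrow> ('a \<Rightarrow> 'e::ab_group_add \<Rightarrow> 'e) \<Rightarrow> ('e \<Rightarrow> 'e \<Rightarrow> 'a)
     \<Rightarrow> (int \<Rightarrow> int \<Rightarrow> ('a, 'e) coch \<Rightarrow> ('a, 'e) coch \<Rightarrow> ('a, 'e) coch)
     \<Rightarrow> (int \<Rightarrow> int \<Rightarrow> ('a, 'e) coch \<Rightarrow> ('a, 'e) coch \<Rightarrow> ('a, 'e) coch) \<Rightarrow> bool" where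
  "is_wedge \<iota> smul ip br wd \<longleftrightarrow>
    (let Cs = Cset \<iota> smul ip in
     (\<forall>r s C1 C2. C1 \<in> Cs r \<longrightarrow> C2 \<in> Cs s \<longrightarrow> wd r s C1 C2 \<in> Cs (r + s)) \<and>
     (\<forall>r s C1 C1' C2. C1 \<in> Cs r \<longrightarrow> C1' \<in> Cs r \<longrightarrow> C2 \<in> Cs s \<longrightarrow>
         wd r s (cadd C1 C1') C2 = cadd (wd r s C1 C2) (wd r s C1' C2)) \<and>
     (\<forall>r s C1 C2 C2'. C1 \<in> Cs r \<longrightarrow> C2 \<in> Cs s \<longrightarrow> C2' \<in> Cs s \<longrightarrow>
         wd r s C1 (cadd C2 C2') = cadd (wd r s C1 C2) (wd r s C1 C2')) \<and>
     (\<forall>r s C1 C2 c. C1 \<in> Cs r \<longrightarrow> C2 \<in> Cs s \<longrightarrow>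
         wd r s (cscale \<iota> smul c C1) C2 = cscale \<iota> smul c (wd r s C1 C2) \<and>
         wd r s C1 (cscale \<iota> smul c C2) = cscale \<iota> smul c (wd r s C1 C2)) \<and>
     (\<forall>a b. wd 0 0 (Sc a) (Sc b) = Sc (a * b)) \<and>
     (\<forall>a x. wd 0 1 (Sc a) (Vc x) = Vc (smul a x) \<and> wd 1 0 (Vc x) (Sc a) = Vc (smul a x)) \<and>
     (\<forall>r s C1 C2 x. C1 \<in> Cs r \<longrightarrow> C2 \<in> Cs s \<longrightarrow>
         br (r + s) 1 (wd r s C1 C2) (Vc x) =
           cadd (csign s (wd (r - 1) s (br r 1 C1 (Vc x)) C2)) (wd r (s - 1) C1 (br s 1 C2 (Vc x)))))"

fun Phistar :: "('a \<Rightarrow> 'b) \<Rightarrow> ('e \<Rightarrow> 'f) \<Rightarrow> ('a, 'e) coch \<Rightarrow> ('b, 'f) coch" where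
  "Phistar \<phi> \<Phi> (Sc a) = Sc (\<phi> a)"
| "Phistar \<phi> \<Phi> (Vc x) = Vc (\<Phi> x)"
| "Phistar \<phi> \<Phi> (Op C) = Op (\<lambda>ys. \<Phi> (C (map (inv \<Phi>) ys)))"

end

theory Submission
  imports Defs
begin

text \<open>Since \<open>\<Phi>\<close> is isometric along \<open>\<phi>\<close>, the map \<open>\<Phi>\<^sub>*\<close> sends symbols to symbols, so it
  preserves every graded piece, and it commutes with insertion of vectors:
  \<open>\<Phi>\<^sub>*(i\<^sub>x C) = i\<^bsub>\<Phi> x\<^esub>(\<Phi>\<^sub>* C)\<close>. Its inverse is the map induced by \<open>(\<phi>\<inverse>, \<Phi>\<inverse>)\<close>.
  Bracket and wedge product satisfy Leibniz rules for insertion of a vector, and by strong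
  nondegeneracy of \<open>\<langle>\<cdot>,\<cdot>\<rangle>\<^sub>F\<close> a cochain of positive degree is determined by all its insertions.
  So an induction on the total degree \<open>r + s\<close> reduces compatibility of \<open>\<Phi>\<^sub>*\<close> with both
  operations to their prescribed values in low degree.\<close>

lemma rhom_0: "rhom f \<Longrightarrow> f 0 = 0"
  unfolding rhom_def by (metis add_cancel_right_right add_0)

lemma rhom_add: "rhom f \<Longrightarrow> f (x + y) = f x + f y"
  by (simp add: rhom_def)

lemma rhom_mult: "rhom f \<Longrightarrow> f (x * y) = f x * f y"
  by (simp add: rhom_def)

lemma Cset_neg: "k < 0 \<Longrightarrow> Cset \<iota> smul ip k = {Sc 0}"
  by (simp add: Cset_def)

lemma Cset_0: "Cset \<iota> smul ip 0 = range Sc"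
  by (simp add: Cset_def)

lemma Cset_1: "Cset \<iota> smul ip 1 = range Vc"
  by (simp add: Cset_def)

lemma Cset_ge2:
  "2 \<le> k \<Longrightarrow> Cset \<iota> smul ip k =
     {Op C | C. multilin (\<lambda>c x. smul (\<iota> c) x) (\<lambda>c x. smul (\<iota> c) x) (nat k - 1) C \<and>
                (\<exists>\<sigma>. is_symbol \<iota> smul ip (nat k) C \<sigma>)}"
  by (simp add: Cset_def)

definition czero :: "int \<Rightarrow> ('a::comm_ring_1, 'e::ab_group_add) coch" where
  "czero k = (if k \<le> 0 then Sc 0 else if k = 1 then Vc 0 else Op (\<lambda>_. 0))"

lemma cadd_idem_eq_czero:
  assumes "D \<in> Cset \<iota> smul ip k" and "cadd D D = D"
  shows "D = czero k"
proof -
  consider "k < 0" | "k = 0" | "k = 1" | "2 \<le> k" by linarith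
  then show ?thesis
  proof cases
    case 4
    then obtain f where f: "D = Op f" using assms(1) by (auto simp: Cset_ge2)
    with assms(2) have "f = (\<lambda>_. 0)" by (simp add: fun_eq_iff)
    with 4 f show ?thesis by (simp add: czero_def)
  qed (use assms in \<open>auto simp: Cset_neg Cset_0 Cset_1 czero_def\<close>)
qed

context
  fixes \<iota> smul ip br
  assumes B: "is_bracket \<iota> smul ip br"
begin

lemma bracket_closed:
  "C1 \<in> Cset \<iota> smul ip r \<Longrightarrow> C2 \<in> Cset \<iota> smul ip s \<Longrightarrow> br r s C1 C2 \<in> Cset \<iota> smul ip (r + s - 2)"
  using B unfolding is_bracket_def Let_def by meson

lemma bracket_add_left:
  "C1 \<in> Cset \<iota> smul ip r \<Longrightarrow> C1' \<in> Cset \<iota> smul ip r \<Longrightarrow> C2 \<in> Cset \<iota> smul ip s \<Longrightarrow>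
   br r s (cadd C1 C1') C2 = cadd (br r s C1 C2) (br r s C1' C2)"
  using B unfolding is_bracket_def Let_def by meson

lemma bracket_add_right:
  "C1 \<in> Cset \<iota> smul ip r \<Longrightarrow> C2 \<in> Cset \<iota> smul ip s \<Longrightarrow> C2' \<in> Cset \<iota> smul ip s \<Longrightarrow>
   br r s C1 (cadd C2 C2') = cadd (br r s C1 C2) (br r s C1 C2')"
  using B unfolding is_bracket_def Let_def by meson

lemma bracket_Vc_Vc: "br 1 1 (Vc x) (Vc y) = Sc (ip x y)"
  using B unfolding is_bracket_def Let_def by meson

lemma bracket_deg2_Sc:
  "Op f \<in> Cset \<iota> smul ip 2 \<Longrightarrow> is_symbol \<iota> smul ip 2 f \<sigma> \<Longrightarrow>
   br 2 0 (Op f) (Sc a) = Sc (\<sigma> [] a) \<and> br 0 2 (Sc a) (Op f) = Sc (- \<sigma> [] a)"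
  using B unfolding is_bracket_def Let_def by meson

lemma bracket_Vc_eq_cins:
  "2 \<le> r \<Longrightarrow> C \<in> Cset \<iota> smul ip r \<Longrightarrow> br r 1 C (Vc x) = cins (nat r) x C"
  using B unfolding is_bracket_def Let_def by meson

lemma bracket_Vc_Leibniz:
  "C1 \<in> Cset \<iota> smul ip r \<Longrightarrow> C2 \<in> Cset \<iota> smul ip s \<Longrightarrow>
   br (r + s - 2) 1 (br r s C1 C2) (Vc x) =
     cadd (csign s (br (r - 1) s (br r 1 C1 (Vc x)) C2)) (br r (s - 1) C1 (br s 1 C2 (Vc x)))"
  using B unfolding is_bracket_def Let_def by meson

lemma bracket_negative_left:
  assumes "r < 0" and C1: "C1 \<in> Cset \<iota> smul ip r" and C2: "C2 \<in> Cset \<iota> smul ip s"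
  shows "br r s C1 C2 = czero (r + s - 2)"
proof (rule cadd_idem_eq_czero[OF bracket_closed[OF C1 C2]])
  have "cadd C1 C1 = C1" using assms by (simp add: Cset_neg)
  then show "cadd (br r s C1 C2) (br r s C1 C2) = br r s C1 C2"
    using bracket_add_left[OF C1 C1 C2] by simp
qed

lemma bracket_negative_right:
  assumes "s < 0" and C1: "C1 \<in> Cset \<iota> smul ip r" and C2: "C2 \<in> Cset \<iota> smul ip s"
  shows "br r s C1 C2 = czero (r + s - 2)"
proof (rule cadd_idem_eq_czero[OF bracket_closed[OF C1 C2]])
  have "cadd C2 C2 = C2" using assms by (simp add: Cset_neg)
  then show "cadd (br r s C1 C2) (br r s C1 C2) = br r s C1 C2"
    using bracket_add_right[OF C1 C2 C2] by simp
qed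

lemma bracket_Vc_inject:
  assumes M: "ipmod smul ip" and "1 \<le> k"
    and D: "D \<in> Cset \<iota> smul ip k" and D': "D' \<in> Cset \<iota> smul ip k"
    and eq: "\<And>y. br k 1 D (Vc y) = br k 1 D' (Vc y)"
  shows "D = D'"
proof (cases "k = 1")
  case True
  then obtain x x' where xx: "D = Vc x" "D' = Vc x'" using D D' by (auto simp: Cset_1)
  with eq True have "ip x = ip x'" by (auto simp: bracket_Vc_Vc fun_eq_iff)
  moreover have "Alin smul (ip x)" and "\<forall>g. Alin smul g \<longrightarrow> (\<exists>!x. ip x = g)"
    using M by (simp_all add: ipmod_def)
  ultimately have "x = x'" by metis
  then show ?thesis using xx by simp
next
  case False
  with \<open>1 \<le> k\<close> have k: "2 \<le> k" by simp
  obtain f g where fg: "D = Op f" "D' = Op g"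
    and mf: "multilin (\<lambda>c x. smul (\<iota> c) x) (\<lambda>c x. smul (\<iota> c) x) (nat k - 1) f"
    and mg: "multilin (\<lambda>c x. smul (\<iota> c) x) (\<lambda>c x. smul (\<iota> c) x) (nat k - 1) g"
    using D D' k by (auto simp: Cset_ge2)
  have ins: "cins (nat k) y D = cins (nat k) y D'" for y
    using eq bracket_Vc_eq_cins[OF k D] bracket_Vc_eq_cins[OF k D'] by metis
  have cons: "f (y # xs) = g (y # xs)" for y xs
  proof (cases "nat k = 2")
    case True
    then show ?thesis
      using ins[of y] fg mf mg by (cases xs) (auto simp: multilin_def)
  next
    case False
    then show ?thesis using ins[of y] fg k by (simp add: fun_eq_iff)
  qed
  have "f [] = g []" using mf mg k by (simp add: multilin_def)
  with cons have "f xs = g xs" for xs by (cases xs) simp_all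
  then show ?thesis using fg by (simp add: fun_eq_iff)
qed

end

context
  fixes \<iota> smul ip br wd
  assumes W: "is_wedge \<iota> smul ip br wd"
begin

lemma wedge_closed:
  "C1 \<in> Cset \<iota> smul ip r \<Longrightarrow> C2 \<in> Cset \<iota> smul ip s \<Longrightarrow> wd r s C1 C2 \<in> Cset \<iota> smul ip (r + s)"
  using W unfolding is_wedge_def Let_def by meson

lemma wedge_add_left:
  "C1 \<in> Cset \<iota> smul ip r \<Longrightarrow> C1' \<in> Cset \<iota> smul ip r \<Longrightarrow> C2 \<in> Cset \<iota> smul ip s \<Longrightarrow>
   wd r s (cadd C1 C1') C2 = cadd (wd r s C1 C2) (wd r s C1' C2)"
  using W unfolding is_wedge_def Let_def by meson

lemma wedge_add_right:
  "C1 \<in> Cset \<iota> smul ip r \<Longrightarrow> C2 \<in> Cset \<iota> smul ip s \<Longrightarrow> C2' \<in> Cset \<iota> smul ip s \<Longrightarrow>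
   wd r s C1 (cadd C2 C2') = cadd (wd r s C1 C2) (wd r s C1 C2')"
  using W unfolding is_wedge_def Let_def by meson

lemma wedge_Sc_Sc: "wd 0 0 (Sc a) (Sc b) = Sc (a * b)"
  using W unfolding is_wedge_def Let_def by meson

lemma wedge_Vc_Leibniz:
  "C1 \<in> Cset \<iota> smul ip r \<Longrightarrow> C2 \<in> Cset \<iota> smul ip s \<Longrightarrow>
   br (r + s) 1 (wd r s C1 C2) (Vc x) =
     cadd (csign s (wd (r - 1) s (br r 1 C1 (Vc x)) C2)) (wd r (s - 1) C1 (br s 1 C2 (Vc x)))"
  using W unfolding is_wedge_def Let_def by meson

lemma wedge_negative_left:
  assumes "r < 0" and C1: "C1 \<in> Cset \<iota> smul ip r" and C2: "C2 \<in> Cset \<iota> smul ip s"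
  shows "wd r s C1 C2 = czero (r + s)"
proof (rule cadd_idem_eq_czero[OF wedge_closed[OF C1 C2]])
  have "cadd C1 C1 = C1" using assms by (simp add: Cset_neg)
  then show "cadd (wd r s C1 C2) (wd r s C1 C2) = wd r s C1 C2"
    using wedge_add_left[OF C1 C1 C2] by simp
qed

lemma wedge_negative_right:
  assumes "s < 0" and C1: "C1 \<in> Cset \<iota> smul ip r" and C2: "C2 \<in> Cset \<iota> smul ip s"
  shows "wd r s C1 C2 = czero (r + s)"
proof (rule cadd_idem_eq_czero[OF wedge_closed[OF C1 C2]])
  have "cadd C2 C2 = C2" using assms by (simp add: Cset_neg)
  then show "cadd (wd r s C1 C2) (wd r s C1 C2) = wd r s C1 C2"
    using wedge_add_right[OF C1 C2 C2] by simp
qed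

end

section \<open>Transport along an isometry\<close>

locale isometry_along =
  fixes \<iota>A :: "'r::comm_ring_1 \<Rightarrow> 'a::comm_ring_1" and \<iota>B :: "'r \<Rightarrow> 'b::comm_ring_1"
    and smulE :: "'a \<Rightarrow> 'e::ab_group_add \<Rightarrow> 'e" and ipE :: "'e \<Rightarrow> 'e \<Rightarrow> 'a"
    and smulF :: "'b \<Rightarrow> 'f::ab_group_add \<Rightarrow> 'f" and ipF :: "'f \<Rightarrow> 'f \<Rightarrow> 'b"
    and \<phi> :: "'a \<Rightarrow> 'b" and \<Phi> :: "'e \<Rightarrow> 'f"
  assumes phi_bij: "bij \<phi>" and phi_hom: "rhom \<phi>" and phi_R: "\<forall>c. \<phi> (\<iota>A c) = \<iota>B c"
    and Phi_bij: "bij \<Phi>"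
    and Phi_add: "\<forall>x y. \<Phi> (x + y) = \<Phi> x + \<Phi> y"
    and Phi_along: "\<forall>a x. \<Phi> (smulE a x) = smulF (\<phi> a) (\<Phi> x)"
    and Phi_isom: "\<forall>x y. \<phi> (ipE x y) = ipF (\<Phi> x) (\<Phi> y)"
begin

abbreviation "\<Psi> \<equiv> inv \<Phi>"
abbreviation "\<psi> \<equiv> inv \<phi>"

lemma Phi_Psi [simp]: "\<Phi> (\<Psi> y) = y"
  using Phi_bij by (meson bij_inv_eq_iff)

lemma Psi_Phi [simp]: "\<Psi> (\<Phi> x) = x"
  using Phi_bij by (simp add: bij_is_inj)

lemma phi_psi [simp]: "\<phi> (\<psi> b) = b"
  using phi_bij by (meson bij_inv_eq_iff)

lemma psi_phi [simp]: "\<psi> (\<phi> a) = a"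
  using phi_bij by (simp add: bij_is_inj)

lemma Psi_comp_Phi [simp]: "\<Psi> \<circ> \<Phi> = id"
  by (simp add: fun_eq_iff)

lemma Phi_eq_iff: "\<Phi> x = \<Phi> y \<longleftrightarrow> x = y"
  by (metis Psi_Phi)

lemma phi_eq_iff: "\<phi> x = \<phi> y \<longleftrightarrow> x = y"
  by (metis psi_phi)

lemma Phi_add_simp [simp]: "\<Phi> (x + y) = \<Phi> x + \<Phi> y"
  using Phi_add by blast

lemma Phi_0 [simp]: "\<Phi> 0 = 0"
  by (metis Phi_add_simp add_cancel_right_right add_0)

lemma Phi_uminus [simp]: "\<Phi> (- x) = - \<Phi> x"
  by (metis Phi_add_simp Phi_0 add.right_inverse add_eq_0_iff)

lemma phi_0 [simp]: "\<phi> 0 = 0"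
  using phi_hom by (rule rhom_0)

lemma phi_add [simp]: "\<phi> (x + y) = \<phi> x + \<phi> y"
  using phi_hom by (rule rhom_add)

lemma phi_mult [simp]: "\<phi> (x * y) = \<phi> x * \<phi> y"
  using phi_hom by (rule rhom_mult)

lemma phi_uminus [simp]: "\<phi> (- x) = - \<phi> x"
  by (metis phi_add phi_0 add.right_inverse add_eq_0_iff)

lemma phi_iota [simp]: "\<phi> (\<iota>A c) = \<iota>B c"
  using phi_R by blast

lemma Phi_smul [simp]: "\<Phi> (smulE a x) = smulF (\<phi> a) (\<Phi> x)"
  using Phi_along by blast

lemma Phi_ip [simp]: "\<phi> (ipE x y) = ipF (\<Phi> x) (\<Phi> y)"
  using Phi_isom by blast

lemma Psi_add: "\<Psi> (x + y) = \<Psi> x + \<Psi> y"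
  by (metis Phi_add_simp Psi_Phi Phi_Psi)

lemma psi_add: "\<psi> (x + y) = \<psi> x + \<psi> y"
  by (metis phi_add psi_phi phi_psi)

lemma psi_mult: "\<psi> (x * y) = \<psi> x * \<psi> y"
  by (metis phi_mult psi_phi phi_psi)

lemma psi_iota: "\<psi> (\<iota>B c) = \<iota>A c"
  by (metis phi_iota psi_phi)

lemma Psi_smul: "\<Psi> (smulF b y) = smulE (\<psi> b) (\<Psi> y)"
  by (metis Phi_smul Psi_Phi Phi_Psi phi_psi)

lemma Psi_ip: "\<psi> (ipF x y) = ipE (\<Psi> x) (\<Psi> y)"
  by (metis Phi_ip psi_phi Phi_Psi)

lemma isometry_along_inv: "isometry_along \<iota>B \<iota>A smulF ipF smulE ipE \<psi> \<Psi>"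
proof -
  have "rhom \<psi>"
    using phi_hom psi_add psi_mult by (metis psi_phi rhom_def)
  then show ?thesis
    unfolding isometry_along_def
    using bij_imp_bij_inv[OF phi_bij] bij_imp_bij_inv[OF Phi_bij] psi_iota Psi_add Psi_smul Psi_ip
    by blast
qed

lemma multilin_transport:
  assumes "multilin (\<lambda>c x. smulE (\<iota>A c) x) sv k f"
    and "\<And>u v. h (u + v) = h u + h v" and "\<And>c v. h (sv c v) = tv c (h v)" and "h 0 = 0"
  shows "multilin (\<lambda>c x. smulF (\<iota>B c) x) tv k (\<lambda>ys. h (f (map \<Psi> ys)))"
  using assms unfolding multilin_def by (simp add: Psi_add Psi_smul psi_iota)

lemma is_der_transport:
  assumes "is_der \<iota>A \<delta>"
  shows "is_der \<iota>B (\<lambda>b. \<phi> (\<delta> (\<psi> b)))"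
  unfolding is_der_def
proof (intro conjI allI)
  fix a b
  show "\<phi> (\<delta> (\<psi> (a + b))) = \<phi> (\<delta> (\<psi> a)) + \<phi> (\<delta> (\<psi> b))"
    using assms by (simp add: is_der_def psi_add)
  show "\<phi> (\<delta> (\<psi> (a * b))) = a * \<phi> (\<delta> (\<psi> b)) + b * \<phi> (\<delta> (\<psi> a))"
    using assms by (simp add: is_der_def psi_mult)
next
  fix c a
  have "\<delta> (\<iota>A c * \<psi> a) = \<iota>A c * \<delta> (\<psi> a)"
    using assms unfolding is_der_def by blast
  then show "\<phi> (\<delta> (\<psi> (\<iota>B c * a))) = \<iota>B c * \<phi> (\<delta> (\<psi> a))"
    by (simp add: psi_mult psi_iota)
qed

lemma is_symbol_transport:
  assumes S: "is_symbol \<iota>A smulE ipE r f \<sigma>"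
  shows "is_symbol \<iota>B smulF ipF r (\<lambda>ys. \<Phi> (f (map \<Psi> ys))) (\<lambda>ys b. \<phi> (\<sigma> (map \<Psi> ys) (\<psi> b)))"
  unfolding is_symbol_def
proof (intro conjI allI impI)
  fix b
  show "multilin (\<lambda>c x. smulF (\<iota>B c) x) (\<lambda>c b. \<iota>B c * b) (r - 2) (\<lambda>ys. \<phi> (\<sigma> (map \<Psi> ys) (\<psi> b)))"
    using S by (intro multilin_transport[where sv = "\<lambda>c a. \<iota>A c * a"]) (simp_all add: is_symbol_def)
next
  fix ys :: "'f list"
  assume "length ys = r - 2"
  then show "is_der \<iota>B (\<lambda>b. \<phi> (\<sigma> (map \<Psi> ys) (\<psi> b)))"
    using S by (intro is_der_transport) (simp add: is_symbol_def)
next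
  fix ys :: "'f list" and u w
  assume "length ys = r - 2"
  then have "\<sigma> (map \<Psi> ys) (ipE (\<Psi> u) (\<Psi> w)) =
      ipE (f (map \<Psi> ys @ [\<Psi> u])) (\<Psi> w) + ipE (\<Psi> u) (f (map \<Psi> ys @ [\<Psi> w]))"
    using S by (simp add: is_symbol_def)
  then show "\<phi> (\<sigma> (map \<Psi> ys) (\<psi> (ipF u w))) =
      ipF (\<Phi> (f (map \<Psi> (ys @ [u])))) w + ipF u (\<Phi> (f (map \<Psi> (ys @ [w]))))"
    by (simp add: Psi_ip)
next
  fix xs ys :: "'f list" and x y u
  assume "length xs + length ys + 2 = r - 1"
  then have "ipE (f (map \<Psi> xs @ \<Psi> x # \<Psi> y # map \<Psi> ys) + f (map \<Psi> xs @ \<Psi> y # \<Psi> x # map \<Psi> ys)) (\<Psi> u)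
      = \<sigma> (map \<Psi> xs @ map \<Psi> ys @ [\<Psi> u]) (ipE (\<Psi> x) (\<Psi> y))"
    using S by (simp add: is_symbol_def)
  then have "ipF (\<Phi> (f (map \<Psi> xs @ \<Psi> x # \<Psi> y # map \<Psi> ys) + f (map \<Psi> xs @ \<Psi> y # \<Psi> x # map \<Psi> ys))) u
      = \<phi> (\<sigma> (map \<Psi> xs @ map \<Psi> ys @ [\<Psi> u]) (ipE (\<Psi> x) (\<Psi> y)))"
    by (metis Phi_ip Phi_Psi)
  then show "ipF (\<Phi> (f (map \<Psi> (xs @ x # y # ys))) + \<Phi> (f (map \<Psi> (xs @ y # x # ys)))) u =
      \<phi> (\<sigma> (map \<Psi> (xs @ ys @ [u])) (\<psi> (ipF x y)))"
    by (simp add: Psi_ip)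
qed

abbreviation "P \<equiv> Phistar \<phi> \<Phi>"

lemma Phistar_Cset: "D \<in> Cset \<iota>A smulE ipE k \<Longrightarrow> P D \<in> Cset \<iota>B smulF ipF k"
proof -
  assume D: "D \<in> Cset \<iota>A smulE ipE k"
  consider "k < 0" | "k = 0" | "k = 1" | "2 \<le> k" by linarith
  then show ?thesis
  proof cases
    case 4
    then obtain f \<sigma> where f: "D = Op f"
      and m: "multilin (\<lambda>c x. smulE (\<iota>A c) x) (\<lambda>c x. smulE (\<iota>A c) x) (nat k - 1) f"
      and s: "is_symbol \<iota>A smulE ipE (nat k) f \<sigma>"
      using D by (auto simp: Cset_ge2)
    have "multilin (\<lambda>c x. smulF (\<iota>B c) x) (\<lambda>c x. smulF (\<iota>B c) x) (nat k - 1) (\<lambda>ys. \<Phi> (f (map \<Psi> ys)))"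
      using m by (rule multilin_transport) simp_all
    then show ?thesis using 4 f is_symbol_transport[OF s] by (auto simp: Cset_ge2)
  qed (use D in \<open>auto simp: Cset_neg Cset_0 Cset_1\<close>)
qed

lemma Phistar_cadd: "P (cadd D D') = cadd (P D) (P D')"
  by (cases D; cases D') auto

lemma Phistar_csign: "P (csign k D) = csign k (P D)"
  by (cases D) (auto simp: csign_def)

lemma Phistar_cins: "P (cins r x D) = cins r (\<Phi> x) (P D)"
  by (cases D) (auto simp: comp_def)

lemma Phistar_czero: "P (czero k) = czero k"
  by (simp add: czero_def)

lemma inj_Phistar: "inj P"
proof (rule injI)
  fix D D'
  assume eq: "P D = P D'"
  show "D = D'"
  proof (cases D; cases D')
    fix f g
    assume fg: "D = Op f" "D' = Op g"
    with eq have "\<forall>ys. \<Phi> (f (map \<Psi> ys)) = \<Phi> (g (map \<Psi> ys))"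
      by (simp add: fun_eq_iff)
    then have "\<Phi> (f (map \<Psi> (map \<Phi> xs))) = \<Phi> (g (map \<Psi> (map \<Phi> xs)))" for xs
      by blast
    then have "f xs = g xs" for xs
      by (simp add: Phi_eq_iff)
    then show ?thesis using fg by (simp add: fun_eq_iff)
  qed (use eq in \<open>auto simp: Phi_eq_iff phi_eq_iff\<close>)
qed

lemma Phistar_inv_Phistar: "Phistar \<psi> \<Psi> (P D) = D"
  using Phi_bij by (cases D) (auto simp: inv_inv_eq comp_def)

lemma bij_betw_Phistar: "bij_betw P (Cset \<iota>A smulE ipE k) (Cset \<iota>B smulF ipF k)"
proof -
  interpret inv: isometry_along \<iota>B \<iota>A smulF ipF smulE ipE \<psi> \<Psi>
    by (rule isometry_along_inv)
  have "Phistar \<psi> \<Psi> D \<in> Cset \<iota>A smulE ipE k" and "P (Phistar \<psi> \<Psi> D) = D"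
    if "D \<in> Cset \<iota>B smulF ipF k" for D
    using inv.Phistar_Cset[OF that] inv.Phistar_inv_Phistar[of D] phi_bij Phi_bij
    by (auto simp: inv_inv_eq)
  then have "Cset \<iota>B smulF ipF k \<subseteq> P ` Cset \<iota>A smulE ipE k"
    by (metis image_eqI subsetI)
  then show ?thesis
    using inj_Phistar Phistar_Cset by (auto simp: bij_betw_def inj_on_def inj_def)
qed

end

section \<open>Compatibility with bracket and wedge product\<close>

locale poisson_transport = isometry_along \<iota>A \<iota>B smulE ipE smulF ipF \<phi> \<Phi>
  for \<iota>A :: "'r::comm_ring_1 \<Rightarrow> 'a::comm_ring_1" and \<iota>B :: "'r \<Rightarrow> 'b::comm_ring_1"
    and smulE :: "'a \<Rightarrow> 'e::ab_group_add \<Rightarrow> 'e" and ipE :: "'e \<Rightarrow> 'e \<Rightarrow> 'a"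
    and smulF :: "'b \<Rightarrow> 'f::ab_group_add \<Rightarrow> 'f" and ipF :: "'f \<Rightarrow> 'f \<Rightarrow> 'b"
    and \<phi> :: "'a \<Rightarrow> 'b" and \<Phi> :: "'e \<Rightarrow> 'f" +
  fixes brE wdE :: "int \<Rightarrow> int \<Rightarrow> ('a, 'e) coch \<Rightarrow> ('a, 'e) coch \<Rightarrow> ('a, 'e) coch"
    and brF wdF :: "int \<Rightarrow> int \<Rightarrow> ('b, 'f) coch \<Rightarrow> ('b, 'f) coch \<Rightarrow> ('b, 'f) coch"
  assumes modF: "ipmod smulF ipF"
    and brE: "is_bracket \<iota>A smulE ipE brE" and wdE: "is_wedge \<iota>A smulE ipE brE wdE"
    and brF: "is_bracket \<iota>B smulF ipF brF" and wdF: "is_wedge \<iota>B smulF ipF brF wdF"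
begin

abbreviation "CE \<equiv> Cset \<iota>A smulE ipE"
abbreviation "CF \<equiv> Cset \<iota>B smulF ipF"

lemma Phistar_bracket_Vc:
  assumes C: "C \<in> CE r"
  shows "P (brE r 1 C (Vc x)) = brF r 1 (P C) (Vc (\<Phi> x))"
proof -
  have V: "Vc x \<in> CE 1" and V': "Vc (\<Phi> x) \<in> CF 1" by (simp_all add: Cset_1)
  have PC: "P C \<in> CF r" using Phistar_Cset[OF C] .
  consider "r < 0" | "r = 0" | "r = 1" | "2 \<le> r" by linarith
  then show ?thesis
  proof cases
    case 1
    then show ?thesis
      using bracket_negative_left[OF brE 1 C V] bracket_negative_left[OF brF 1 PC V']
      by (simp add: Phistar_czero)
  next
    case 2
    then show ?thesis
      using bracket_closed[OF brE C V] bracket_closed[OF brF PC V'] by (simp add: Cset_neg)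
  next
    case 3
    then obtain y where "C = Vc y" using C by (auto simp: Cset_1)
    with 3 show ?thesis by (simp add: bracket_Vc_Vc[OF brE] bracket_Vc_Vc[OF brF])
  next
    case 4
    then show ?thesis
      using bracket_Vc_eq_cins[OF brE 4 C] bracket_Vc_eq_cins[OF brF 4 PC] by (simp add: Phistar_cins)
  qed
qed

lemma Phistar_eq_if_insertions_eq:
  assumes "1 \<le> k" and D: "D \<in> CE k" and D': "D' \<in> CF k"
    and ins: "\<And>x. P (brE k 1 D (Vc x)) = brF k 1 D' (Vc (\<Phi> x))"
  shows "P D = D'"
proof (rule bracket_Vc_inject[OF brF modF \<open>1 \<le> k\<close> Phistar_Cset[OF D] D'])
  fix y
  show "brF k 1 (P D) (Vc y) = brF k 1 D' (Vc y)"
    using ins[of "\<Psi> y"] Phistar_bracket_Vc[OF D, of "\<Psi> y"] by simp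
qed

lemma Phistar_bracket:
  "C1 \<in> CE r \<Longrightarrow> C2 \<in> CE s \<Longrightarrow> P (brE r s C1 C2) = brF r s (P C1) (P C2)"
proof (induction "nat (r + s)" arbitrary: r s C1 C2 rule: less_induct)
  case less
  note C1 = less.prems(1) and C2 = less.prems(2)
  have PC1: "P C1 \<in> CF r" and PC2: "P C2 \<in> CF s" using C1 C2 by (simp_all add: Phistar_Cset)
  consider "r < 0" | "s < 0" | "0 \<le> r" "0 \<le> s" "r + s < 2"
    | "r = 0" "s = 2" | "r = 1" "s = 1" | "r = 2" "s = 0" | "r + s \<ge> 3"
    by linarith
  then show ?case
  proof cases
    case 1
    then show ?thesis
      using bracket_negative_left[OF brE 1 C1 C2] bracket_negative_left[OF brF 1 PC1 PC2]
      by (simp add: Phistar_czero)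
  next
    case 2
    then show ?thesis
      using bracket_negative_right[OF brE 2 C1 C2] bracket_negative_right[OF brF 2 PC1 PC2]
      by (simp add: Phistar_czero)
  next
    case 3
    then show ?thesis
      using bracket_closed[OF brE C1 C2] bracket_closed[OF brF PC1 PC2] by (simp add: Cset_neg)
  next
    case 4
    then obtain a f \<sigma> where "C1 = Sc a" "C2 = Op f" and s: "is_symbol \<iota>A smulE ipE 2 f \<sigma>"
      using C1 C2 by (auto simp: Cset_0 Cset_ge2)
    with 4 show ?thesis
      using bracket_deg2_Sc[OF brE _ s] bracket_deg2_Sc[OF brF _ is_symbol_transport[OF s]] C2 PC2
      by simp
  next
    case 5
    then obtain x y where "C1 = Vc x" "C2 = Vc y" using C1 C2 by (auto simp: Cset_1)
    with 5 show ?thesis by (simp add: bracket_Vc_Vc[OF brE] bracket_Vc_Vc[OF brF])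
  next
    case 6
    then obtain a f \<sigma> where "C2 = Sc a" "C1 = Op f" and s: "is_symbol \<iota>A smulE ipE 2 f \<sigma>"
      using C1 C2 by (auto simp: Cset_0 Cset_ge2)
    with 6 show ?thesis
      using bracket_deg2_Sc[OF brE _ s] bracket_deg2_Sc[OF brF _ is_symbol_transport[OF s]] C1 PC1
      by simp
  next
    case 7
    show ?thesis
    proof (rule Phistar_eq_if_insertions_eq)
      show "brE r s C1 C2 \<in> CE (r + s - 2)" and "brF r s (P C1) (P C2) \<in> CF (r + s - 2)"
        by (rule bracket_closed[OF brE C1 C2], rule bracket_closed[OF brF PC1 PC2])
      fix x
      have V: "Vc x \<in> CE 1" by (simp add: Cset_1)
      have IH: "P (brE (r - 1) s (brE r 1 C1 (Vc x)) C2) = brF (r - 1) s (P (brE r 1 C1 (Vc x))) (P C2)"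
        "P (brE r (s - 1) C1 (brE s 1 C2 (Vc x))) = brF r (s - 1) (P C1) (P (brE s 1 C2 (Vc x)))"
        using bracket_closed[OF brE C1 V] bracket_closed[OF brE C2 V] 7
        by (auto intro!: less.hyps C1 C2)
      show "P (brE (r + s - 2) 1 (brE r s C1 C2) (Vc x)) = brF (r + s - 2) 1 (brF r s (P C1) (P C2)) (Vc (\<Phi> x))"
        using IH by (simp add: bracket_Vc_Leibniz[OF brE C1 C2] bracket_Vc_Leibniz[OF brF PC1 PC2]
            Phistar_cadd Phistar_csign Phistar_bracket_Vc C1 C2)
    qed (use 7 in simp)
  qed
qed

lemma Phistar_wedge:
  "C1 \<in> CE r \<Longrightarrow> C2 \<in> CE s \<Longrightarrow> P (wdE r s C1 C2) = wdF r s (P C1) (P C2)"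
proof (induction "nat (r + s)" arbitrary: r s C1 C2 rule: less_induct)
  case less
  note C1 = less.prems(1) and C2 = less.prems(2)
  have PC1: "P C1 \<in> CF r" and PC2: "P C2 \<in> CF s" using C1 C2 by (simp_all add: Phistar_Cset)
  consider "r < 0" | "s < 0" | "r = 0" "s = 0" | "r + s \<ge> 1" by linarith
  then show ?case
  proof cases
    case 1
    then show ?thesis
      using wedge_negative_left[OF wdE 1 C1 C2] wedge_negative_left[OF wdF 1 PC1 PC2]
      by (simp add: Phistar_czero)
  next
    case 2
    then show ?thesis
      using wedge_negative_right[OF wdE 2 C1 C2] wedge_negative_right[OF wdF 2 PC1 PC2]
      by (simp add: Phistar_czero)
  next
    case 3
    then obtain a b where "C1 = Sc a" "C2 = Sc b" using C1 C2 by (auto simp: Cset_0)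
    with 3 show ?thesis by (simp add: wedge_Sc_Sc[OF wdE] wedge_Sc_Sc[OF wdF])
  next
    case 4
    show ?thesis
    proof (rule Phistar_eq_if_insertions_eq)
      show "wdE r s C1 C2 \<in> CE (r + s)" and "wdF r s (P C1) (P C2) \<in> CF (r + s)"
        by (rule wedge_closed[OF wdE C1 C2], rule wedge_closed[OF wdF PC1 PC2])
      fix x
      have V: "Vc x \<in> CE 1" by (simp add: Cset_1)
      have IH: "P (wdE (r - 1) s (brE r 1 C1 (Vc x)) C2) = wdF (r - 1) s (P (brE r 1 C1 (Vc x))) (P C2)"
        "P (wdE r (s - 1) C1 (brE s 1 C2 (Vc x))) = wdF r (s - 1) (P C1) (P (brE s 1 C2 (Vc x)))"
        using bracket_closed[OF brE C1 V] bracket_closed[OF brE C2 V] 4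
        by (auto intro!: less.hyps C1 C2)
      show "P (brE (r + s) 1 (wdE r s C1 C2) (Vc x)) = brF (r + s) 1 (wdF r s (P C1) (P C2)) (Vc (\<Phi> x))"
        using IH by (simp add: wedge_Vc_Leibniz[OF wdE C1 C2] wedge_Vc_Leibniz[OF wdF PC1 PC2]
            Phistar_cadd Phistar_csign Phistar_bracket_Vc C1 C2)
    qed (use 4 in simp)
  qed
qed

end

theorem mainTheorem13:
  fixes \<iota>A :: "'r::comm_ring_1 \<Rightarrow> 'a::comm_ring_1" and \<iota>B :: "'r \<Rightarrow> 'b::comm_ring_1"
    and smulE :: "'a \<Rightarrow> 'e::ab_group_add \<Rightarrow> 'e" and ipE :: "'e \<Rightarrow> 'e \<Rightarrow> 'a"
    and smulF :: "'b \<Rightarrow> 'f::ab_group_add \<Rightarrow> 'f" and ipF :: "'f \<Rightarrow> 'f \<Rightarrow> 'b"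
    and brE wdE :: "int \<Rightarrow> int \<Rightarrow> ('a, 'e) coch \<Rightarrow> ('a, 'e) coch \<Rightarrow> ('a, 'e) coch"
    and brF wdF :: "int \<Rightarrow> int \<Rightarrow> ('b, 'f) coch \<Rightarrow> ('b, 'f) coch \<Rightarrow> ('b, 'f) coch"
    and \<phi> :: "'a \<Rightarrow> 'b" and \<Phi> :: "'e \<Rightarrow> 'f"
  assumes QR: "\<forall>n::nat. 0 < n \<longrightarrow> (\<exists>y::'r. of_nat n * y = 1)"
    and algA: "rhom \<iota>A" and algB: "rhom \<iota>B"
    and modE: "ipmod smulE ipE" and modF: "ipmod smulF ipF"
    and brE: "is_bracket \<iota>A smulE ipE brE" and wdE: "is_wedge \<iota>A smulE ipE brE wdE"
    and brF: "is_bracket \<iota>B smulF ipF brF" and wdF: "is_wedge \<iota>B smulF ipF brF wdF"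
    and phi_bij: "bij \<phi>" and phi_hom: "rhom \<phi>" and phi_R: "\<forall>c. \<phi> (\<iota>A c) = \<iota>B c"
    and Phi_bij: "bij \<Phi>"
    and Phi_add: "\<forall>x y. \<Phi> (x + y) = \<Phi> x + \<Phi> y"
    and Phi_along: "\<forall>a x. \<Phi> (smulE a x) = smulF (\<phi> a) (\<Phi> x)"
    and Phi_isom: "\<forall>x y. \<phi> (ipE x y) = ipF (\<Phi> x) (\<Phi> y)"
  shows "(\<forall>r. 0 \<le> r \<longrightarrow> bij_betw (Phistar \<phi> \<Phi>) (Cset \<iota>A smulE ipE r) (Cset \<iota>B smulF ipF r)) \<and>
         (\<forall>r s C1 C2. 0 \<le> r \<longrightarrow> 0 \<le> s \<longrightarrow>
            C1 \<in> Cset \<iota>A smulE ipE r \<longrightarrow> C2 \<in> Cset \<iota>A smulE ipE s \<longrightarrow>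
            Phistar \<phi> \<Phi> (brE r s C1 C2) = brF r s (Phistar \<phi> \<Phi> C1) (Phistar \<phi> \<Phi> C2) \<and>
            Phistar \<phi> \<Phi> (wdE r s C1 C2) = wdF r s (Phistar \<phi> \<Phi> C1) (Phistar \<phi> \<Phi> C2))"
proof -
  interpret poisson_transport \<iota>A \<iota>B smulE ipE smulF ipF \<phi> \<Phi> brE wdE brF wdF
    by unfold_locales (use assms in blast)+
  show ?thesis
    using bij_betw_Phistar Phistar_bracket Phistar_wedge by blast
qed

end
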